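(* Let $p$ and $q$ be distinct primes. Let $G=Q\rtimes P$ be a finite non-abelian semi-direct product of a Sylow $q$-subgroup $Q$ by a non-normal cyclic Sylow $p$-subgroup $P$. Suppose that $Q$ is special, so either $Q$ is elementary abelian or $Q'=Z(Q)=\Phi(Q)$, and suppose that $P$ acts by conjugation trivially on $Q'$ and irreducibly on $Q/Q'$. Then $G$ is exponent-critical.
   Context: A finite group $G$ is exponent-critical if $\exp(G)$ is not the least common multiple of the exponents of the proper non-abelian subgroups of $G$. A $q$-group $Q$ is special if either $Q$ is elementary abelian or $Q$ has nilpotency class $2$ with $Q'=Z(Q)=\Phi(Q)$ elementary abelian. *)

theory Defs
  imports "HOL-Algebra.Algebra"
begin

text \<open>Exponent of a subgroup H of G: lcm of the orders of its elements
 (orders computed in G, which coincide with the orders in H).\<close>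
definition sub_exp :: "('a, 'b) monoid_scheme \<Rightarrow> 'a set \<Rightarrow> nat" where
  "sub_exp G H = Lcm (group.ord G ` H)"

definition group_exp :: "('a, 'b) monoid_scheme \<Rightarrow> nat" where
  "group_exp G = sub_exp G (carrier G)"

definition abelian_sub :: "('a, 'b) monoid_scheme \<Rightarrow> 'a set \<Rightarrow> bool" where
  "abelian_sub G H \<longleftrightarrow> (\<forall>x\<in>H. \<forall>y\<in>H. x \<otimes>\<^bsub>G\<^esub> y = y \<otimes>\<^bsub>G\<^esub> x)"

definition exponent_critical :: "('a, 'b) monoid_scheme \<Rightarrow> bool" where
  "exponent_critical G \<longleftrightarrow>
     group_exp G \<noteq> Lcm (sub_exp G ` {H. subgroup H G \<and> H \<subset> carrier G \<and> \<not> abelian_sub G H})"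

definition sub_center :: "('a, 'b) monoid_scheme \<Rightarrow> 'a set \<Rightarrow> 'a set" where
  "sub_center G H = {z \<in> H. \<forall>x\<in>H. z \<otimes>\<^bsub>G\<^esub> x = x \<otimes>\<^bsub>G\<^esub> z}"

definition maximal_sub :: "('a, 'b) monoid_scheme \<Rightarrow> 'a set \<Rightarrow> 'a set \<Rightarrow> bool" where
  "maximal_sub G M H \<longleftrightarrow> subgroup M G \<and> M \<subset> H \<and>
     (\<forall>K. subgroup K G \<longrightarrow> M \<subseteq> K \<longrightarrow> K \<subseteq> H \<longrightarrow> K = M \<or> K = H)"

text \<open>Frattini subgroup of H: intersection of the maximal subgroups of H (H if there are none).\<close>
definition frattini :: "('a, 'b) monoid_scheme \<Rightarrow> 'a set \<Rightarrow> 'a set" where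
  "frattini G H = H \<inter> \<Inter> {M. maximal_sub G M H}"

definition elementary_abelian :: "('a, 'b) monoid_scheme \<Rightarrow> nat \<Rightarrow> 'a set \<Rightarrow> bool" where
  "elementary_abelian G q H \<longleftrightarrow> abelian_sub G H \<and> (\<forall>x\<in>H. x [^]\<^bsub>G\<^esub> q = \<one>\<^bsub>G\<^esub>)"

definition special :: "('a, 'b) monoid_scheme \<Rightarrow> nat \<Rightarrow> 'a set \<Rightarrow> bool" where
  "special G q Q \<longleftrightarrow> elementary_abelian G q Q \<or>
     (\<not> abelian_sub G Q \<and> derived G Q \<subseteq> sub_center G Q \<comment> \<open>nilpotency class 2\<close>
      \<and> derived G Q = sub_center G Q \<and> sub_center G Q = frattini G Q
      \<and> elementary_abelian G q (derived G Q))"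

definition sylow_sub :: "('a, 'b) monoid_scheme \<Rightarrow> nat \<Rightarrow> 'a set \<Rightarrow> bool" where
  "sylow_sub G p P \<longleftrightarrow> subgroup P G \<and>
     (\<exists>k m. card P = p ^ k \<and> order G = p ^ k * m \<and> \<not> p dvd m)"

definition cyclic_sub :: "('a, 'b) monoid_scheme \<Rightarrow> 'a set \<Rightarrow> bool" where
  "cyclic_sub G P \<longleftrightarrow> (\<exists>g\<in>P. P = generate G {g})"

definition invariant_under :: "('a, 'b) monoid_scheme \<Rightarrow> 'a set \<Rightarrow> 'a set \<Rightarrow> bool" where
  "invariant_under G P N \<longleftrightarrow> (\<forall>x\<in>P. (\<lambda>y. x \<otimes>\<^bsub>G\<^esub> y \<otimes>\<^bsub>G\<^esub> inv\<^bsub>G\<^esub> x) ` N = N)"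

text \<open>P acts irreducibly by conjugation on Q/Q': the quotient is nontrivial and
 the only P-invariant subgroups N with Q' <= N <= Q are Q' and Q.\<close>
definition acts_irreducibly :: "('a, 'b) monoid_scheme \<Rightarrow> 'a set \<Rightarrow> 'a set \<Rightarrow> bool" where
  "acts_irreducibly G P Q \<longleftrightarrow> derived G Q \<subset> Q \<and>
     (\<forall>N. subgroup N G \<longrightarrow> derived G Q \<subseteq> N \<longrightarrow> N \<subseteq> Q \<longrightarrow> invariant_under G P N
        \<longrightarrow> N = derived G Q \<or> N = Q)"

end

theory Submission
  imports Defs
begin

text \<open>
  Let \<open>|P| = p^k\<close>. A generator of \<open>P\<close> has order \<open>p^k\<close>, the full \<open>p\<close>-part of \<open>|G|\<close>, so it
  suffices that no proper non-abelian subgroup \<open>H\<close> contains an element \<open>h\<close> of order \<open>p^k\<close>.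
  Write \<open>h = a x\<close> with \<open>a \<in> Q\<close>, \<open>x \<in> P\<close>; as \<open>|P|\<close> and \<open>|Q|\<close> are coprime, \<open>x\<close> generates \<open>P\<close>.
  Since \<open>Q'\<close> is central in \<open>Q\<close> and centralised by \<open>P\<close>, it is central in \<open>G\<close>, so
  \<open>N = (H \<inter> Q) Q'\<close> is a subgroup normalised by \<open>h\<close> and by \<open>Q\<close>, hence by \<open>x = a\<inverse> h\<close> and by \<open>P\<close>.
  By irreducibility \<open>N = Q\<close> or \<open>N = Q'\<close>. If \<open>N = Q\<close> then \<open>H \<inter> Q = Q\<close>, as \<open>Q' \<subseteq> \<Phi>(Q)\<close>
  consists of non-generators; then \<open>H\<close> contains \<open>Q\<close> and \<open>x\<close>, so \<open>H = G\<close>. If \<open>N = Q'\<close>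
  then \<open>H = (H \<inter> Q)\<langle>h\<rangle>\<close> with \<open>H \<inter> Q \<subseteq> Q'\<close>, which is abelian and centralised by \<open>h\<close>,
  so \<open>H\<close> is abelian.
\<close>

lemma dvd_prime_power_mult_reduce:
  fixes p k m a :: nat
  assumes "Factorial_Ring.prime p" "a dvd p ^ Suc k * m" "\<not> p ^ Suc k dvd a"
  shows "a dvd p ^ k * m"
proof -
  obtain c where c: "p ^ Suc k * m = a * c"
    using assms(2) by (auto elim: dvdE)
  show ?thesis
  proof (cases "p dvd c")
    case True
    then obtain d where "c = p * d" by (auto elim: dvdE)
    with c have "p * (p ^ k * m) = p * (a * d)" by (simp add: algebra_simps)
    then have "p ^ k * m = a * d" using assms(1) prime_gt_0_nat by simp
    then show ?thesis by simp
  next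
    case False
    then have "coprime (p ^ Suc k) c"
      using assms(1) by (simp add: prime_imp_coprime)
    moreover have "p ^ Suc k dvd a * c" using c by (metis dvd_triv_left)
    ultimately show ?thesis using assms(3) coprime_dvd_mult_left_iff by blast
  qed
qed

lemma (in group) subgroup_nat_pow_closed:
  assumes "subgroup H G" "h \<in> H"
  shows "h [^] (n::nat) \<in> H"
  using subgroup_int_pow_closed[OF assms, of "int n"] by (simp add: int_pow_int)

lemma (in group) inv_mult_cancel_left [simp]:
  "x \<in> carrier G \<Longrightarrow> y \<in> carrier G \<Longrightarrow> inv x \<otimes> (x \<otimes> y) = y"
  by (simp add: m_assoc[symmetric])

lemma (in group) mult_inv_cancel_left [simp]:
  "x \<in> carrier G \<Longrightarrow> y \<in> carrier G \<Longrightarrow> x \<otimes> (inv x \<otimes> y) = y"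
  by (simp add: m_assoc[symmetric])

lemma (in group) ord_dvd_card_subgroup:
  assumes "subgroup H G" "y \<in> H"
  shows "ord y dvd card H"
proof -
  interpret H: group "G\<lparr>carrier := H\<rparr>"
    using subgroup.subgroup_is_group[OF assms(1) is_group] .
  have "y [^]\<^bsub>G\<lparr>carrier := H\<rparr>\<^esub> order (G\<lparr>carrier := H\<rparr>) = \<one>\<^bsub>G\<lparr>carrier := H\<rparr>\<^esub>"
    using H.pow_order_eq_1 assms(2) by simp
  then have "y [^] card H = \<one>"
    by (simp add: order_def nat_pow_consistent[symmetric])
  then show ?thesis
    using pow_eq_id subgroup.mem_carrier[OF assms] by blast
qed

lemma (in group) eq_one_if_pow_coprime_card:
  assumes "subgroup H G" "y \<in> H" "y [^] n = \<one>" "coprime n (card H)"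
  shows "y = \<one>"
proof -
  have y: "y \<in> carrier G" using subgroup.mem_carrier[OF assms(1,2)] .
  have "ord y dvd n" using assms(3) y pow_eq_id by blast
  moreover have "ord y dvd card H" using ord_dvd_card_subgroup[OF assms(1,2)] .
  ultimately have "ord y = 1" using assms(4) coprime_common_divisor_nat by blast
  then show ?thesis using ord_eq_1 y by blast
qed

lemma (in group) normal_pow_mult:
  assumes "Q \<lhd> G" "a \<in> Q" "x \<in> carrier G"
  shows "\<exists>a'\<in>Q. (a \<otimes> x) [^] (n::nat) = a' \<otimes> x [^] n"
proof (induction n)
  case 0
  then show ?case using normal_imp_subgroup[OF assms(1)] subgroup.one_closed by force
next
  case (Suc n)
  then obtain a' where a': "a' \<in> Q" "(a \<otimes> x) [^] n = a' \<otimes> x [^] n" by blast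
  have Q: "subgroup Q G" using normal_imp_subgroup[OF assms(1)] .
  have a: "a \<in> carrier G" "a' \<in> carrier G"
    using subgroup.mem_carrier[OF Q] assms(2) a'(1) by auto
  have conj: "x [^] n \<otimes> a \<otimes> inv (x [^] n) \<in> Q"
    using normal.inv_op_closed2[OF assms(1) _ assms(2)] assms(3) by simp
  have "(a \<otimes> x) [^] Suc n = a' \<otimes> x [^] n \<otimes> (a \<otimes> x)" by (simp add: a'(2))
  also have "\<dots> = (a' \<otimes> (x [^] n \<otimes> a \<otimes> inv (x [^] n))) \<otimes> (x [^] n \<otimes> x)"
    using a assms(3) by (simp add: m_assoc)
  also have "x [^] n \<otimes> x = x [^] Suc n" by simp
  finally show ?case using subgroup.m_closed[OF Q a'(1) conj] by blast
qed

text \<open>\<open>a z a\<inverse> = z [z\<inverse>, a]\<close>, and the commutator lies in \<open>Q'\<close>.\<close>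

lemma (in group) conj_closed_if_derived_le:
  assumes "subgroup Q G" "subgroup N G" "derived G Q \<subseteq> N" "N \<subseteq> Q" "a \<in> Q" "z \<in> N"
  shows "a \<otimes> z \<otimes> inv a \<in> N"
proof -
  have z: "z \<in> Q" using assms(4,6) by blast
  have c: "a \<in> carrier G" "z \<in> carrier G"
    using subgroup.mem_carrier[OF assms(1)] assms(5) z by auto
  have "inv z \<otimes> a \<otimes> inv (inv z) \<otimes> inv a \<in> derived_set G Q"
    using subgroup.m_inv_closed[OF assms(1) z] assms(5) by blast
  then have "inv z \<otimes> a \<otimes> z \<otimes> inv a \<in> N"
    using assms(3) c unfolding derived_def by (auto intro: generate.incl)
  moreover have "a \<otimes> z \<otimes> inv a = z \<otimes> (inv z \<otimes> a \<otimes> z \<otimes> inv a)"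
    using c by (simp add: m_assoc[symmetric])
  ultimately show ?thesis using subgroup.m_closed[OF assms(2) assms(6)] by simp
qed

lemma (in group) subgroup_set_mult_commuting:
  assumes K: "subgroup K G" and D: "subgroup D G"
    and comm: "\<And>c k. c \<in> D \<Longrightarrow> k \<in> K \<Longrightarrow> c \<otimes> k = k \<otimes> c"
  shows "subgroup (K <#> D) G"
proof (rule subgroupI)
  show "K <#> D \<subseteq> carrier G"
    using setmult_subset_G subgroup.subset K D by blast
  have "\<one> \<otimes> \<one> \<in> K <#> D"
    using subgroup.one_closed[OF K] subgroup.one_closed[OF D] unfolding set_mult_def by blast
  then show "K <#> D \<noteq> {}" by blast
next
  fix z assume "z \<in> K <#> D"
  then obtain k c where kc: "k \<in> K" "c \<in> D" "z = k \<otimes> c" unfolding set_mult_def by blast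
  have "inv z = inv c \<otimes> inv k"
    using kc subgroup.mem_carrier[OF K] subgroup.mem_carrier[OF D] by (simp add: inv_mult_group)
  also have "\<dots> = inv k \<otimes> inv c"
    using comm subgroup.m_inv_closed[OF K kc(1)] subgroup.m_inv_closed[OF D kc(2)] by blast
  finally show "inv z \<in> K <#> D"
    using subgroup.m_inv_closed[OF K kc(1)] subgroup.m_inv_closed[OF D kc(2)]
    unfolding set_mult_def by blast
next
  fix z w assume "z \<in> K <#> D" "w \<in> K <#> D"
  then obtain k c k' c' where kc: "k \<in> K" "c \<in> D" "z = k \<otimes> c" "k' \<in> K" "c' \<in> D" "w = k' \<otimes> c'"
    unfolding set_mult_def by blast
  have carr: "k \<in> carrier G" "c \<in> carrier G" "k' \<in> carrier G" "c' \<in> carrier G"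
    using kc subgroup.mem_carrier[OF K] subgroup.mem_carrier[OF D] by auto
  have "z \<otimes> w = k \<otimes> (c \<otimes> k') \<otimes> c'" using kc carr by (simp add: m_assoc)
  also have "\<dots> = k \<otimes> (k' \<otimes> c) \<otimes> c'" using comm[OF kc(2,4)] by metis
  also have "\<dots> = (k \<otimes> k') \<otimes> (c \<otimes> c')" using carr by (simp add: m_assoc)
  finally show "z \<otimes> w \<in> K <#> D"
    using subgroup.m_closed[OF K kc(1,4)] subgroup.m_closed[OF D kc(2,5)]
    unfolding set_mult_def by blast
qed

lemma (in group) invariant_under_generate:
  assumes fin: "finite (carrier G)" and x: "x \<in> carrier G" and N: "N \<subseteq> carrier G"
    and closed: "\<And>z. z \<in> N \<Longrightarrow> x \<otimes> z \<otimes> inv x \<in> N"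
  shows "invariant_under G (generate G {x}) N"
proof -
  have pow_closed: "x [^] n \<otimes> z \<otimes> inv (x [^] n) \<in> N" if "z \<in> N" for n :: nat and z
    using that
  proof (induction n arbitrary: z)
    case (Suc n)
    have "x [^] Suc n \<otimes> z \<otimes> inv (x [^] Suc n) = x [^] n \<otimes> (x \<otimes> z \<otimes> inv x) \<otimes> inv (x [^] n)"
      using x subsetD[OF N Suc.prems] by (simp add: inv_mult_group m_assoc)
    then show ?case using Suc closed by simp
  qed (use N in auto)
  have gen_closed: "y \<otimes> z \<otimes> inv y \<in> N" if "y \<in> generate G {x}" "z \<in> N" for y z
    using that pow_closed generate_pow_on_finite_carrier[OF fin x] by auto
  show ?thesis unfolding invariant_under_def
  proof (intro ballI equalityI subsetI)
    fix y z assume y: "y \<in> generate G {x}"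
    have yc: "y \<in> carrier G" using generate_incl[of "{x}"] x y by blast
    have iy: "inv y \<in> generate G {x}"
      using subgroup.m_inv_closed[OF generate_is_subgroup y] x by blast
    { assume "z \<in> (\<lambda>z. y \<otimes> z \<otimes> inv y) ` N"
      then show "z \<in> N" using gen_closed[OF y] by blast }
    { assume z: "z \<in> N"
      then have "z = y \<otimes> (inv y \<otimes> z \<otimes> inv (inv y)) \<otimes> inv y"
        using yc subsetD[OF N z] by (simp add: m_assoc)
      then show "z \<in> (\<lambda>z. y \<otimes> z \<otimes> inv y) ` N" using gen_closed[OF iy z] by blast }
  qed
qed

lemma (in group) maximal_sub_above:
  assumes "finite (carrier G)" "subgroup K G" "K \<subset> Q"
  obtains M where "maximal_sub G M Q" "K \<subseteq> M"
proof -
  define S where "S = {M. subgroup M G \<and> K \<subseteq> M \<and> M \<subset> Q}"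
  have "finite S"
    using assms(1) subgroup.subset unfolding S_def by (blast intro: finite_subset[of _ "Pow (carrier G)"])
  moreover have "K \<in> S" using assms unfolding S_def by blast
  ultimately obtain M where M: "M \<in> S" "\<forall>L\<in>S. M \<subseteq> L \<longrightarrow> M = L"
    using finite_has_maximal by blast
  have "maximal_sub G M Q"
    using M unfolding maximal_sub_def S_def by blast
  with M(1) show thesis using that unfolding S_def by blast
qed

lemma (in group) set_mult_nongenerators_eqD:
  assumes "finite (carrier G)" "subgroup K G" "K \<subseteq> Q"
    and D: "\<And>M. maximal_sub G M Q \<Longrightarrow> D \<subseteq> M" and KD: "K <#> D = Q"
  shows "K = Q"
proof (rule ccontr)
  assume "K \<noteq> Q"
  with assms obtain M where M: "maximal_sub G M Q" "K \<subseteq> M"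
    using maximal_sub_above by blast
  then have "subgroup M G" "M \<subset> Q" unfolding maximal_sub_def by auto
  moreover have "K <#> D \<subseteq> M"
    using M D[OF M(1)] subgroup.m_closed[OF \<open>subgroup M G\<close>] unfolding set_mult_def by blast
  ultimately show False using KD by blast
qed

lemma (in group) abelian_sub_if_central_times_powers:
  assumes h: "h \<in> carrier G" and D: "D \<subseteq> carrier G" "abelian_sub G D"
    and hD: "\<And>c. c \<in> D \<Longrightarrow> h \<otimes> c = c \<otimes> h"
    and H: "\<And>z. z \<in> H \<Longrightarrow> \<exists>b\<in>D. \<exists>n::nat. z = b \<otimes> h [^] n"
  shows "abelian_sub G H"
  unfolding abelian_sub_def
proof (intro ballI)
  fix z w assume "z \<in> H" "w \<in> H"
  then obtain b n b' n' where bn: "b \<in> D" "z = b \<otimes> h [^] (n::nat)" "b' \<in> D" "w = b' \<otimes> h [^] (n'::nat)"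
    using H by meson
  have c: "b \<in> carrier G" "b' \<in> carrier G" using bn(1,3) D(1) by auto
  have pow_comm: "h [^] i \<otimes> c = c \<otimes> h [^] i" if "c \<in> D" for i :: nat and c
    using group_commutes_pow hD that h D(1) by blast
  have regroup: "(b1 \<otimes> h [^] i) \<otimes> (b2 \<otimes> h [^] j) = (b1 \<otimes> b2) \<otimes> (h [^] i \<otimes> h [^] j)"
    if "b1 \<in> D" "b2 \<in> D" for b1 b2 and i j :: nat
  proof -
    have "(b1 \<otimes> h [^] i) \<otimes> (b2 \<otimes> h [^] j) = b1 \<otimes> (h [^] i \<otimes> b2) \<otimes> h [^] j"
      using that D(1) h by (simp add: m_assoc subset_iff)
    also have "\<dots> = (b1 \<otimes> b2) \<otimes> (h [^] i \<otimes> h [^] j)"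
      using that D(1) h pow_comm by (simp add: m_assoc subset_iff)
    finally show ?thesis .
  qed
  have "z \<otimes> w = (b \<otimes> b') \<otimes> (h [^] n \<otimes> h [^] n')"
    using regroup bn by simp
  also have "\<dots> = (b' \<otimes> b) \<otimes> (h [^] n' \<otimes> h [^] n)"
    using D(2) bn(1,3) nat_pow_comm h unfolding abelian_sub_def by metis
  also have "\<dots> = w \<otimes> z"
    using regroup bn by simp
  finally show "z \<otimes> w = w \<otimes> z" .
qed

lemma (in group) derived_le_if_abelian_sub:
  assumes "abelian_sub G Q" "Q \<subseteq> carrier G" "subgroup M G"
  shows "derived G Q \<subseteq> M"
proof -
  have "derived_set G Q \<subseteq> {\<one>}"
  proof
    fix z assume "z \<in> derived_set G Q"
    then obtain a b where ab: "a \<in> Q" "b \<in> Q" "z = a \<otimes> b \<otimes> inv a \<otimes> inv b" by blast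
    with assms(2) have c: "a \<in> carrier G" "b \<in> carrier G" by auto
    have "a \<otimes> b = b \<otimes> a" using assms(1) ab unfolding abelian_sub_def by blast
    then have "z = b \<otimes> (a \<otimes> inv a) \<otimes> inv b" using ab(3) c by (simp add: m_assoc)
    then show "z \<in> {\<one>}" using c by simp
  qed
  then show ?thesis
    using generate_subgroup_incl[OF _ assms(3)] subgroup.one_closed[OF assms(3)]
    unfolding derived_def by blast
qed

lemma (in group) special_derived_le_sub_center:
  assumes "subgroup Q G" "special G q Q"
  shows "derived G Q \<subseteq> sub_center G Q"
proof (cases "elementary_abelian G q Q")
  case True
  then have "sub_center G Q = Q"
    unfolding elementary_abelian_def abelian_sub_def sub_center_def by blast
  then show ?thesis using derived_incl[OF subset_refl assms(1)] by simp
qed (use assms in \<open>auto simp: special_def\<close>)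

lemma (in group) special_derived_le_maximal_sub:
  assumes "subgroup Q G" "special G q Q" "maximal_sub G M Q"
  shows "derived G Q \<subseteq> M"
proof (cases "elementary_abelian G q Q")
  case True
  then have "abelian_sub G Q" unfolding elementary_abelian_def by blast
  moreover have "subgroup M G" using assms(3) unfolding maximal_sub_def by blast
  ultimately show ?thesis using derived_le_if_abelian_sub subgroup.subset[OF assms(1)] by blast
next
  case False
  then have "derived G Q = frattini G Q" using assms(2) unfolding special_def by blast
  then show ?thesis using assms(3) unfolding frattini_def by blast
qed

lemma (in group) sub_exp_dvd_if_no_ord:
  assumes fin: "finite (carrier G)" and p: "Factorial_Ring.prime p" and order_G: "order G = p ^ Suc k * m"
    and H: "subgroup H G" and no_ord: "\<And>h. h \<in> H \<Longrightarrow> ord h \<noteq> p ^ Suc k"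
  shows "sub_exp G H dvd p ^ k * m"
  unfolding sub_exp_def
proof (rule Lcm_least)
  fix e assume "e \<in> ord ` H"
  then obtain y where y: "y \<in> H" "e = ord y" by blast
  have yc: "y \<in> carrier G" using subgroup.mem_carrier[OF H y(1)] .
  have "\<not> p ^ Suc k dvd ord y"
  proof
    assume dvd: "p ^ Suc k dvd ord y"
    define d where "d = ord y div p ^ Suc k"
    have "ord y > 0" using ord_ge_1[OF fin yc] by simp
    with dvd have "d dvd ord y" "d \<noteq> 0" "ord y div d = p ^ Suc k"
      using prime_gt_0_nat[OF p] unfolding d_def by (auto elim!: dvdE)
    then have "ord (y [^] d) = p ^ Suc k" using ord_pow[OF yc] by simp
    moreover have "y [^] d \<in> H" using subgroup_nat_pow_closed[OF H y(1)] .
    ultimately show False using no_ord by blast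
  qed
  moreover have "ord y dvd p ^ Suc k * m" using ord_dvd_group_order[OF yc] order_G by simp
  ultimately show "e dvd p ^ k * m" using dvd_prime_power_mult_reduce[OF p] y(2) by blast
qed

lemma (in group) exponent_critical_if_no_proper_nonabelian_sub_has_ord:
  assumes fin: "finite (carrier G)" and p: "Factorial_Ring.prime p" and order_G: "order G = p ^ k * m"
    and "\<not> p dvd m" "0 < k"
    and g: "g \<in> carrier G" "ord g = p ^ k"
    and no_ord: "\<And>H h. subgroup H G \<Longrightarrow> H \<subset> carrier G \<Longrightarrow> \<not> abelian_sub G H \<Longrightarrow> h \<in> H
      \<Longrightarrow> ord h \<noteq> p ^ k"
  shows "exponent_critical G"
proof -
  obtain i where k: "k = Suc i" using \<open>0 < k\<close> gr0_implies_Suc by blast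
  have "p ^ k dvd group_exp G"
    using g unfolding group_exp_def sub_exp_def by (metis dvd_Lcm imageI)
  moreover have "Lcm (sub_exp G ` {H. subgroup H G \<and> H \<subset> carrier G \<and> \<not> abelian_sub G H})
      dvd p ^ i * m"
  proof (rule Lcm_least)
    fix e assume "e \<in> sub_exp G ` {H. subgroup H G \<and> H \<subset> carrier G \<and> \<not> abelian_sub G H}"
    then obtain H where "e = sub_exp G H" "subgroup H G" "H \<subset> carrier G" "\<not> abelian_sub G H"
      by blast
    then show "e dvd p ^ i * m"
      using sub_exp_dvd_if_no_ord[OF fin p, of i m H] order_G no_ord k by simp
  qed
  moreover have "\<not> p ^ k dvd p ^ i * m"
    using \<open>\<not> p dvd m\<close> prime_gt_0_nat[OF p] k by simp
  ultimately show ?thesis unfolding exponent_critical_def by (metis dvd_trans)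
qed

locale coprime_irreducible_semidirect = group G for G (structure) +
  fixes P Q :: "'a set"
  assumes finite_carrier: "finite (carrier G)"
    and Q_normal: "Q \<lhd> G" and P_subgroup: "subgroup P G"
    and set_mult_Q_P: "Q <#> P = carrier G"
    and coprime_card: "coprime (card P) (card Q)"
    and derived_le_center: "derived G Q \<subseteq> sub_center G Q"
    and derived_le_maximal: "\<And>M. maximal_sub G M Q \<Longrightarrow> derived G Q \<subseteq> M"
    and P_centralizes_derived: "\<forall>x\<in>P. \<forall>y\<in>derived G Q. x \<otimes> y \<otimes> inv x = y"
    and irreducible: "acts_irreducibly G P Q"
begin

abbreviation Q' where "Q' \<equiv> derived G Q"

lemma Q_subgroup: "subgroup Q G"
  using Q_normal normal_imp_subgroup by blast

lemma Q_carrier: "a \<in> Q \<Longrightarrow> a \<in> carrier G"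
  using subgroup.mem_carrier[OF Q_subgroup] .

lemma P_carrier: "x \<in> P \<Longrightarrow> x \<in> carrier G"
  using subgroup.mem_carrier[OF P_subgroup] .

lemma derived_subgroup: "subgroup Q' G"
  using derived_is_subgroup[OF subgroup.subset[OF Q_subgroup]] .

lemma derived_le_Q: "Q' \<subseteq> Q"
  using derived_le_center unfolding sub_center_def by blast

lemma derived_abelian: "abelian_sub G Q'"
  using derived_le_center unfolding sub_center_def abelian_sub_def by blast

lemma derived_central: "c \<in> Q' \<Longrightarrow> g \<in> carrier G \<Longrightarrow> g \<otimes> c = c \<otimes> g"
proof -
  assume c: "c \<in> Q'" and "g \<in> carrier G"
  then obtain a x where ax: "a \<in> Q" "x \<in> P" "g = a \<otimes> x"
    using set_mult_Q_P unfolding set_mult_def by blast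
  have carr: "a \<in> carrier G" "x \<in> carrier G" "c \<in> carrier G"
    using ax Q_carrier P_carrier c derived_le_Q by auto
  have "x \<otimes> c = c \<otimes> x"
    using P_centralizes_derived ax(2) c carr by (metis inv_solve_right m_closed)
  moreover have "c \<otimes> a = a \<otimes> c" using derived_le_center c ax(1) unfolding sub_center_def by blast
  ultimately show "g \<otimes> c = c \<otimes> g" using ax(3) carr by (metis m_assoc)
qed

lemma generate_eq_P_if_ord:
  assumes a: "a \<in> Q" and x: "x \<in> P" and ord: "ord (a \<otimes> x) = card P"
  shows "generate G {x} = P"
proof -
  let ?h = "a \<otimes> x"
  have carr: "a \<in> carrier G" "x \<in> carrier G" using a x Q_carrier P_carrier by auto
  obtain b where b: "b \<in> Q" "?h [^] ord x = b \<otimes> x [^] ord x"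
    using normal_pow_mult[OF Q_normal a carr(2)] by blast
  have hb: "?h [^] ord x = b" using b carr Q_carrier by simp
  have "b [^] card P = (?h [^] ord ?h) [^] ord x"
    using hb[symmetric] ord carr by (simp add: nat_pow_pow mult.commute)
  then have "b [^] card P = \<one>" using carr by simp
  with hb have "?h [^] ord x = \<one>"
    using eq_one_if_pow_coprime_card[OF Q_subgroup b(1)] coprime_card by simp
  then have "card P dvd ord x" using pow_eq_id carr ord by simp
  moreover have "ord x dvd card P" using ord_dvd_card_subgroup[OF P_subgroup x] .
  ultimately have "card (generate G {x}) = card P"
    using generate_pow_card[OF carr(2)] by (simp add: dvd_antisym)
  moreover have "generate G {x} \<subseteq> P" using generate_subgroup_incl[OF _ P_subgroup] x by blast
  moreover have "finite P" using finite_subset[OF subgroup.subset[OF P_subgroup] finite_carrier] .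
  ultimately show ?thesis using card_subset_eq by blast
qed

lemma carrier_eq_Q_times_powers:
  assumes a: "a \<in> Q" and gen: "generate G {x} = P" and z: "z \<in> carrier G"
  shows "\<exists>b\<in>Q. \<exists>n::nat. z = b \<otimes> (a \<otimes> x) [^] n"
proof -
  have x: "x \<in> carrier G" using gen generate.incl[of x "{x}"] P_carrier by blast
  obtain c y where cy: "c \<in> Q" "y \<in> P" "z = c \<otimes> y"
    using z set_mult_Q_P unfolding set_mult_def by blast
  obtain n :: nat where y: "y = x [^] n"
    using cy(2) gen generate_pow_on_finite_carrier[OF finite_carrier x] by blast
  obtain a' where a': "a' \<in> Q" "(a \<otimes> x) [^] n = a' \<otimes> x [^] n"
    using normal_pow_mult[OF Q_normal a x] by blast
  have "z = (c \<otimes> inv a') \<otimes> (a \<otimes> x) [^] n"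
    using cy(3) a'(2) y x Q_carrier[OF cy(1)] Q_carrier[OF a'(1)] by (simp add: m_assoc)
  moreover have "c \<otimes> inv a' \<in> Q"
    using subgroup.m_closed[OF Q_subgroup cy(1) subgroup.m_inv_closed[OF Q_subgroup a'(1)]] .
  ultimately show ?thesis by blast
qed

lemma intersection_set_mult_derived_subgroup:
  assumes "subgroup H G"
  shows "subgroup ((H \<inter> Q) <#> Q') G"
proof (rule subgroup_set_mult_commuting[OF subgroups_Inter_pair[OF assms Q_subgroup] derived_subgroup])
  fix c k assume "c \<in> Q'" "k \<in> H \<inter> Q"
  then show "c \<otimes> k = k \<otimes> c" using derived_central Q_carrier by (metis IntD2)
qed

lemma intersection_set_mult_derived_le_Q: "(H \<inter> Q) <#> Q' \<subseteq> Q"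
  using derived_le_Q subgroup.m_closed[OF Q_subgroup] unfolding set_mult_def by blast

lemma derived_le_intersection_set_mult:
  assumes "subgroup H G"
  shows "Q' \<subseteq> (H \<inter> Q) <#> Q'"
proof
  fix c assume c: "c \<in> Q'"
  have "\<one> \<in> H \<inter> Q" using assms Q_subgroup subgroup.one_closed by blast
  with c have "\<one> \<otimes> c \<in> (H \<inter> Q) <#> Q'" unfolding set_mult_def by blast
  then show "c \<in> (H \<inter> Q) <#> Q'" using c derived_le_Q Q_carrier by auto
qed

lemma intersection_set_mult_derived_invariant:
  assumes H: "subgroup H G" and a: "a \<in> Q" and x: "x \<in> P" and h: "a \<otimes> x \<in> H"
    and gen: "generate G {x} = P"
  shows "invariant_under G P ((H \<inter> Q) <#> Q')"
proof -
  let ?N = "(H \<inter> Q) <#> Q'" and ?h = "a \<otimes> x"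
  have N: "subgroup ?N G" using intersection_set_mult_derived_subgroup[OF H] .
  have carr: "a \<in> carrier G" "x \<in> carrier G" "?h \<in> carrier G"
    using a x Q_carrier P_carrier by auto
  have h_closed: "?h \<otimes> z \<otimes> inv ?h \<in> ?N" if "z \<in> ?N" for z
  proof -
    obtain k c where kc: "k \<in> H \<inter> Q" "c \<in> Q'" "z = k \<otimes> c"
      using \<open>z \<in> ?N\<close> unfolding set_mult_def by blast
    have kc_carr: "k \<in> carrier G" "c \<in> carrier G" using kc(1,2) derived_le_Q Q_carrier by auto
    have "?h \<otimes> z \<otimes> inv ?h = (?h \<otimes> k \<otimes> inv ?h) \<otimes> (?h \<otimes> c \<otimes> inv ?h)"
      using kc(3) kc_carr carr(3) by (simp add: m_assoc)
    also have "?h \<otimes> c \<otimes> inv ?h = c"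
      using derived_central[OF kc(2) carr(3)] kc_carr carr(3) by (simp add: m_assoc)
    finally have eq: "?h \<otimes> z \<otimes> inv ?h = (?h \<otimes> k \<otimes> inv ?h) \<otimes> c" .
    have "?h \<otimes> k \<otimes> inv ?h \<in> H"
      using kc(1) h H by (simp add: subgroup.m_closed subgroup.m_inv_closed)
    moreover have "?h \<otimes> k \<otimes> inv ?h \<in> Q"
      using normal.inv_op_closed2[OF Q_normal carr(3)] kc(1) by blast
    ultimately show ?thesis using eq kc(2) unfolding set_mult_def by blast
  qed
  have x_closed: "x \<otimes> z \<otimes> inv x \<in> ?N" if "z \<in> ?N" for z
  proof -
    have zc: "z \<in> carrier G" using that subgroup.mem_carrier[OF N] by blast
    have "x \<otimes> z \<otimes> inv x = inv a \<otimes> (?h \<otimes> z \<otimes> inv ?h) \<otimes> inv (inv a)"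
      using carr zc by (simp add: inv_mult_group m_assoc)
    then show ?thesis
      using conj_closed_if_derived_le[OF Q_subgroup N derived_le_intersection_set_mult[OF H]
          intersection_set_mult_derived_le_Q subgroup.m_inv_closed[OF Q_subgroup a] h_closed[OF that]]
      by simp
  qed
  show ?thesis
    using invariant_under_generate[OF finite_carrier carr(2) subgroup.subset[OF N] x_closed] gen
    by simp
qed

lemma abelian_sub_if_intersection_set_mult_derived_eq_derived:
  assumes H: "subgroup H G" and a: "a \<in> Q" and gen: "generate G {x} = P" and h: "a \<otimes> x \<in> H"
    and N: "(H \<inter> Q) <#> Q' = Q'"
  shows "abelian_sub G H"
proof -
  let ?h = "a \<otimes> x"
  have hc: "?h \<in> carrier G" using subgroup.mem_carrier[OF H h] .
  have HQ: "H \<inter> Q \<subseteq> Q'"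
  proof
    fix k assume k: "k \<in> H \<inter> Q"
    then have "k \<otimes> \<one> \<in> (H \<inter> Q) <#> Q'"
      using subgroup.one_closed[OF derived_subgroup] unfolding set_mult_def by blast
    then show "k \<in> Q'" using N k Q_carrier by simp
  qed
  have decomp: "\<exists>b\<in>Q'. \<exists>n::nat. z = b \<otimes> ?h [^] n" if z: "z \<in> H" for z
  proof -
    obtain b and n :: nat where b: "b \<in> Q" "z = b \<otimes> ?h [^] n"
      using carrier_eq_Q_times_powers[OF a gen subgroup.mem_carrier[OF H z]] by blast
    have "b = z \<otimes> inv (?h [^] n)" using b Q_carrier hc by (simp add: m_assoc)
    then have "b \<in> H"
      using subgroup.m_closed[OF H z subgroup.m_inv_closed[OF H subgroup_nat_pow_closed[OF H h]]]
      by simp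
    then show ?thesis using b HQ by blast
  qed
  show ?thesis
    using abelian_sub_if_central_times_powers[OF hc subgroup.subset[OF derived_subgroup]
        derived_abelian derived_central[OF _ hc] decomp] .
qed

lemma carrier_le_if_intersection_set_mult_derived_eq_Q:
  assumes H: "subgroup H G" and a: "a \<in> Q" and gen: "generate G {x} = P" and h: "a \<otimes> x \<in> H"
    and N: "(H \<inter> Q) <#> Q' = Q"
  shows "carrier G \<subseteq> H"
proof -
  have "H \<inter> Q = Q"
    using set_mult_nongenerators_eqD[OF finite_carrier subgroups_Inter_pair[OF H Q_subgroup]
        _ derived_le_maximal N] by blast
  then have QH: "Q \<subseteq> H" by blast
  have x: "x \<in> carrier G" using gen generate.incl[of x "{x}"] P_carrier by blast
  have "x = inv a \<otimes> (a \<otimes> x)" using a x Q_carrier by simp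
  then have "x \<in> H"
    using subgroup.m_closed[OF H subgroup.m_inv_closed[OF H subsetD[OF QH a]] h] by simp
  then have "P \<subseteq> H" using gen generate_subgroup_incl[OF _ H] by blast
  then have "Q <#> P \<subseteq> H"
    using QH subgroup.m_closed[OF H] unfolding set_mult_def by blast
  then show ?thesis using set_mult_Q_P by simp
qed

theorem ord_ne_card_P:
  assumes H: "subgroup H G" "H \<subset> carrier G" "\<not> abelian_sub G H" and h: "h \<in> H"
  shows "ord h \<noteq> card P"
proof
  assume ord: "ord h = card P"
  have "h \<in> Q <#> P" using subgroup.mem_carrier[OF H(1) h] set_mult_Q_P by simp
  then obtain a x where ax: "a \<in> Q" "x \<in> P" "h = a \<otimes> x" unfolding set_mult_def by blast
  have gen: "generate G {x} = P" using generate_eq_P_if_ord ax ord by blast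
  let ?N = "(H \<inter> Q) <#> Q'"
  have "invariant_under G P ?N"
    using intersection_set_mult_derived_invariant[OF H(1) ax(1,2) _ gen] h ax(3) by simp
  then have "?N = Q' \<or> ?N = Q"
    using irreducible[unfolded acts_irreducibly_def, THEN conjunct2, rule_format,
        OF intersection_set_mult_derived_subgroup[OF H(1)] derived_le_intersection_set_mult[OF H(1)]
        intersection_set_mult_derived_le_Q] by blast
  then show False
    using abelian_sub_if_intersection_set_mult_derived_eq_derived[OF H(1) ax(1) gen]
      carrier_le_if_intersection_set_mult_derived_eq_Q[OF H(1) ax(1) gen] H(2,3) h ax(3)
    by blast
qed

end

theorem mainTheorem10:
  fixes G (structure) and p q :: nat and P Q :: "'a set"
  assumes "group G" and "finite (carrier G)"
    and "Factorial_Ring.prime p" and "Factorial_Ring.prime q" and "p \<noteq> q"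
    and "\<not> abelian_sub G (carrier G)"
    and "sylow_sub G q Q" and "sylow_sub G p P"
    and "Q \<lhd> G" and "Q \<inter> P = {\<one>}" and "Q <#> P = carrier G"
    and "cyclic_sub G P" and "\<not> (P \<lhd> G)"
    and "special G q Q"
    and "\<forall>x\<in>P. \<forall>y\<in>derived G Q. x \<otimes> y \<otimes> inv x = y"
    and "acts_irreducibly G P Q"
  shows "exponent_critical G"
proof -
  interpret group G by fact
  obtain k m where P: "subgroup P G" "card P = p ^ k" "order G = p ^ k * m" "\<not> p dvd m"
    using \<open>sylow_sub G p P\<close> unfolding sylow_sub_def by blast
  obtain j where card_Q: "card Q = q ^ j" using \<open>sylow_sub G q Q\<close> unfolding sylow_sub_def by blast
  obtain g where g: "g \<in> P" "P = generate G {g}" using \<open>cyclic_sub G P\<close> unfolding cyclic_sub_def by blast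
  have g_carr: "g \<in> carrier G" using subgroup.mem_carrier[OF P(1) g(1)] .
  have "k \<noteq> 0"
  proof
    assume "k = 0"
    then have "P = {\<one>}"
      using P(1,2) subgroup.one_closed card_1_singletonE by (metis power_0 singletonD)
    then show False using \<open>\<not> (P \<lhd> G)\<close> one_is_normal by simp
  qed
  have Q: "subgroup Q G" using \<open>Q \<lhd> G\<close> normal_imp_subgroup by blast
  have "coprime (card P) (card Q)"
    using P(2) card_Q assms(3-5) by (simp add: primes_coprime)
  then interpret coprime_irreducible_semidirect G P Q
    using assms(1,2,9,11,15,16) P(1) special_derived_le_sub_center[OF Q \<open>special G q Q\<close>]
      special_derived_le_maximal_sub[OF Q \<open>special G q Q\<close>]
    by (simp add: coprime_irreducible_semidirect_def coprime_irreducible_semidirect_axioms_def)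
  have "ord g = p ^ k" using generate_pow_card[OF g_carr] g(2) P(2) by simp
  then show ?thesis
    using exponent_critical_if_no_proper_nonabelian_sub_has_ord[OF \<open>finite (carrier G)\<close> assms(3) P(3,4)]
      \<open>k \<noteq> 0\<close> g_carr ord_ne_card_P P(2) by auto
qed

end
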